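(* Let $G$ be a Chevalley–Demazure group scheme with root system $\Phi\in\{E_6,E_7,E_8,F_4\}$ and $R$ a commutative integral domain with $R^*\neq\{1\}$. Let $\alpha,\beta\in\Phi$ be linearly independent. Then there is a torus witness for $(\alpha,\beta)$, except possibly when $R^*=\{\pm1\}$, $\Phi=F_4$, and $\alpha,\beta$ are orthogonal and both long.
   Context: $T$ is the distinguished maximal torus of $G$. A torus witness for $(\alpha,\beta)$ is an element $s\in T(R)$ that centralizes the root subgroup $U_\alpha$ and satisfies $\mathrm{C}_{U_\beta}(s)=1$. *)

theory Defs
  imports Complex_Main
begin

text \<open>Vectors of the ambient Euclidean space R^8 are modelled as functions
  nat => real supported on {0..<8} (coordinates e_0,...,e_7).
  The root systems E6, E7, E8, F4 are given in their standard (Bourbaki)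
  coordinates.\<close>

type_synonym vec = "nat \<Rightarrow> real"

definition ip :: "vec \<Rightarrow> vec \<Rightarrow> real" where
  "ip v w = (\<Sum>k<8. v k * w k)"

definition unitv :: "nat \<Rightarrow> vec" where
  "unitv i = (\<lambda>k. if k = i then 1 else 0)"

definition lin_indep2 :: "vec \<Rightarrow> vec \<Rightarrow> bool" where
  "lin_indep2 a b \<longleftrightarrow> (\<forall>c d :: real. (\<lambda>k. c * a k + d * b k) = (\<lambda>k. 0) \<longrightarrow> c = 0 \<and> d = 0)"

definition E8_roots :: "vec set" where
  "E8_roots =
     {v. \<exists>i j a b. i < j \<and> j < 8 \<and> a \<in> {-1, 1} \<and> b \<in> {-1, 1} \<and>
           v = (\<lambda>k. a * unitv i k + b * unitv j k)}
   \<union> {v. (\<forall>k<8. v k \<in> {1/2, -1/2}) \<and> (\<forall>k\<ge>8. v k = 0) \<and>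
           even (card {k. k < 8 \<and> v k < 0})}"

text \<open>E7 = roots of E8 orthogonal to e_6 + e_7 (Bourbaki's e7+e8);
  E6 = roots of E7 orthogonal moreover to e_5 + e_7 (Bourbaki's e6+e8).\<close>

definition E7_roots :: "vec set" where
  "E7_roots = {v \<in> E8_roots. ip v (\<lambda>k. unitv 6 k + unitv 7 k) = 0}"

definition E6_roots :: "vec set" where
  "E6_roots = {v \<in> E7_roots. ip v (\<lambda>k. unitv 5 k + unitv 7 k) = 0}"

definition F4_roots :: "vec set" where
  "F4_roots =
     {v. \<exists>i a. i < 4 \<and> a \<in> {-1, 1} \<and> v = (\<lambda>k. a * unitv i k)}
   \<union> {v. \<exists>i j a b. i < j \<and> j < 4 \<and> a \<in> {-1, 1} \<and> b \<in> {-1, 1} \<and>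
           v = (\<lambda>k. a * unitv i k + b * unitv j k)}
   \<union> {v. (\<forall>k<4. v k \<in> {1/2, -1/2}) \<and> (\<forall>k\<ge>4. v k = 0)}"

definition root_lattice :: "vec set \<Rightarrow> vec set" where
  "root_lattice \<Phi> = {v. \<exists>c :: vec \<Rightarrow> int. v = (\<lambda>k. \<Sum>r\<in>\<Phi>. of_int (c r) * r k)}"

definition real_span :: "vec set \<Rightarrow> vec set" where
  "real_span \<Phi> = {v. \<exists>c :: vec \<Rightarrow> real. v = (\<lambda>k. \<Sum>r\<in>\<Phi>. c r * r k)}"

definition weight_lattice :: "vec set \<Rightarrow> vec set" where
  "weight_lattice \<Phi> = {v \<in> real_span \<Phi>. \<forall>a\<in>\<Phi>. 2 * ip v a / ip a a \<in> \<int>}"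

text \<open>The character lattice of a Chevalley--Demazure group scheme with root
  system Phi: an additive subgroup Lambda with Q(Phi) <= Lambda <= P(Phi).
  It determines the isogeny type of G.\<close>

definition is_group_lattice :: "vec set \<Rightarrow> vec set \<Rightarrow> bool" where
  "is_group_lattice \<Phi> \<Lambda> \<longleftrightarrow>
     root_lattice \<Phi> \<subseteq> \<Lambda> \<and> \<Lambda> \<subseteq> weight_lattice \<Phi> \<and>
     (\<forall>x\<in>\<Lambda>. \<forall>y\<in>\<Lambda>. (\<lambda>k. x k + y k) \<in> \<Lambda>) \<and> (\<forall>x\<in>\<Lambda>. (\<lambda>k. - x k) \<in> \<Lambda>)"

text \<open>The maximal torus T(R) = Hom(Lambda, R^*): elements are group
  homomorphisms from Lambda to the unit group of R (values outside Lambda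
  are irrelevant).\<close>

definition torus :: "vec set \<Rightarrow> (vec \<Rightarrow> 'r::comm_ring_1) set" where
  "torus \<Lambda> = {s. (\<forall>x\<in>\<Lambda>. s x dvd 1) \<and>
                   (\<forall>x\<in>\<Lambda>. \<forall>y\<in>\<Lambda>. s (\<lambda>k. x k + y k) = s x * s y)}"

text \<open>Action of a torus element s on the root subgroup
  U_beta = { x_beta(t) : t in R }:  s x_beta(t) s^-1 = x_beta(beta(s) t),
  where beta(s) is the value of the character s at beta.\<close>

definition root_act :: "(vec \<Rightarrow> 'r::comm_ring_1) \<Rightarrow> vec \<Rightarrow> 'r \<Rightarrow> 'r" where
  "root_act s \<beta> t = s \<beta> * t"

definition centralizes_root :: "(vec \<Rightarrow> 'r::comm_ring_1) \<Rightarrow> vec \<Rightarrow> bool" where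
  "centralizes_root s \<alpha> \<longleftrightarrow> (\<forall>t. root_act s \<alpha> t = t)"

text \<open>C_{U_beta}(s) = 1, with x_beta(t) identified with t.\<close>
definition trivial_centralizer_in_root :: "(vec \<Rightarrow> 'r::comm_ring_1) \<Rightarrow> vec \<Rightarrow> bool" where
  "trivial_centralizer_in_root s \<beta> \<longleftrightarrow> {t. root_act s \<beta> t = t} = {0}"

definition torus_witness :: "vec set \<Rightarrow> (vec \<Rightarrow> 'r::comm_ring_1) \<Rightarrow> vec \<Rightarrow> vec \<Rightarrow> bool" where
  "torus_witness \<Lambda> s \<alpha> \<beta> \<longleftrightarrow>
     s \<in> torus \<Lambda> \<and> centralizes_root s \<alpha> \<and> trivial_centralizer_in_root s \<beta>"

end

theory Submission
  imports Defs
begin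

text \<open>For a root \<gamma> of norm 2 and a unit u, the cocharacter of \<gamma> evaluated at u is a torus element s
  with \<open>\<delta>(s) = u ^ \<langle>\<delta>, \<gamma>\<rangle>\<close> for every character \<delta>; the exponents are integers because characters
  lie in the weight lattice. So it suffices to find a root \<gamma> of norm 2 with \<open>\<langle>\<alpha>, \<gamma>\<rangle> = 0\<close> and
  \<open>\<langle>\<beta>, \<gamma>\<rangle> = \<plusminus>1\<close>: then every unit \<open>u \<noteq> 1\<close> gives a witness. Such a separating root is found by a
  case analysis on the shapes of \<alpha> and \<beta> in standard coordinates. Usually \<open>\<gamma> = \<plusminus>e\<^sub>k \<plusminus> e\<^sub>m\<close> works,
  with the signs chosen to balance \<alpha> on the coordinates k and m; otherwise a half-integral root
  does. The analysis fails only for two orthogonal long roots of F4, and there \<open>\<gamma> = \<beta>\<close> works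
  as soon as some unit u satisfies \<open>u\<^sup>2 \<noteq> 1\<close>, that is \<open>R\<^sup>* \<noteq> {\<plusminus>1}\<close>.\<close>

section \<open>Torus elements from roots\<close>

text \<open>Rings of class \<open>comm_ring_1\<close> have no inverse operation, so \<open>u\<^sup>n\<close> for an integer n is written
  with an explicit inverse v of u.\<close>

definition int_pow :: "'a::comm_ring_1 \<Rightarrow> 'a \<Rightarrow> int \<Rightarrow> 'a" where
  "int_pow u v n = u ^ nat n * v ^ nat (- n)"

lemma int_pow_add:
  assumes "u * v = 1"
  shows "int_pow u v (m + n) = int_pow u v m * int_pow u v n"
proof -
  have cancel: "u ^ a * v ^ b = u ^ c * v ^ d" if "int a - int b = int c - int d" for a b c d
  proof -
    have "u ^ a * v ^ b = u ^ a * v ^ b * (u * v) ^ d" using assms by simp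
    also have "\<dots> = u ^ (a + d) * v ^ (b + d)" by (simp add: power_add power_mult_distrib ac_simps)
    also have "\<dots> = u ^ (c + b) * v ^ (b + d)"
    proof -
      have "a + d = c + b" using that by linarith
      then show ?thesis by simp
    qed
    also have "\<dots> = u ^ c * v ^ d * (u * v) ^ b" by (simp add: power_add power_mult_distrib ac_simps)
    finally show ?thesis using assms by simp
  qed
  have "int_pow u v (m + n) = u ^ (nat m + nat n) * v ^ (nat (- m) + nat (- n))"
    unfolding int_pow_def by (rule cancel) simp
  then show ?thesis unfolding int_pow_def by (simp add: power_add ac_simps)
qed

lemma int_pow_dvd_one:
  assumes "u * v = 1"
  shows "int_pow u v n dvd 1"
proof -
  have "u dvd 1" "v dvd 1" using assms by (metis dvdI mult.commute)+
  then have "u ^ nat n dvd 1" "v ^ nat (- n) dvd 1" by (metis dvd_power_same power_one)+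
  then show ?thesis unfolding int_pow_def by (metis mult_dvd_mono mult_1)
qed

lemma lattice_pairing_Ints:
  assumes "is_group_lattice \<Phi> \<Lambda>" "\<gamma> \<in> \<Phi>" "ip \<gamma> \<gamma> = 2" "x \<in> \<Lambda>"
  shows "ip x \<gamma> \<in> \<int>"
proof -
  have "x \<in> weight_lattice \<Phi>" using assms(1,4) unfolding is_group_lattice_def by auto
  then show ?thesis using assms(2,3) unfolding weight_lattice_def by auto
qed

lemma ip_add_left: "ip (\<lambda>k. x k + y k) w = ip x w + ip y w"
  unfolding ip_def by (simp add: distrib_right sum.distrib)

lemma coroot_character_in_torus:
  assumes "is_group_lattice \<Phi> \<Lambda>" "\<gamma> \<in> \<Phi>" "ip \<gamma> \<gamma> = 2" "u * v = 1"
  shows "(\<lambda>x. int_pow u v \<lfloor>ip x \<gamma>\<rfloor>) \<in> torus \<Lambda>"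
  unfolding torus_def
proof (intro CollectI conjI ballI)
  fix x y assume xy: "x \<in> \<Lambda>" "y \<in> \<Lambda>"
  obtain m n where "ip x \<gamma> = of_int m" "ip y \<gamma> = of_int n"
    using lattice_pairing_Ints[OF assms(1-3)] xy by (meson Ints_cases)
  then have "\<lfloor>ip (\<lambda>k. x k + y k) \<gamma>\<rfloor> = \<lfloor>ip x \<gamma>\<rfloor> + \<lfloor>ip y \<gamma>\<rfloor>"
    by (simp add: ip_add_left flip: of_int_add)
  then show "int_pow u v \<lfloor>ip (\<lambda>k. x k + y k) \<gamma>\<rfloor> = int_pow u v \<lfloor>ip x \<gamma>\<rfloor> * int_pow u v \<lfloor>ip y \<gamma>\<rfloor>"
    using int_pow_add[OF assms(4)] by simp
qed (use int_pow_dvd_one[OF assms(4)] in simp)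

lemma trivial_centralizer_in_root_iff:
  fixes s :: "vec \<Rightarrow> 'r::idom"
  shows "trivial_centralizer_in_root s \<beta> \<longleftrightarrow> s \<beta> \<noteq> 1"
proof -
  have "s \<beta> * t = t \<longleftrightarrow> (s \<beta> - 1) * t = 0" for t by (simp add: algebra_simps)
  then have "{t. root_act s \<beta> t = t} = (if s \<beta> = 1 then UNIV else {0})"
    by (auto simp: root_act_def)
  moreover have "UNIV \<noteq> {0 :: 'r}" using one_neq_zero by blast
  ultimately show ?thesis unfolding trivial_centralizer_in_root_def by simp
qed

lemma torus_witness_of_root:
  fixes u v :: "'r::idom"
  assumes "is_group_lattice \<Phi> \<Lambda>" "\<gamma> \<in> \<Phi>" "ip \<gamma> \<gamma> = 2" "u * v = 1"
    and "ip \<alpha> \<gamma> = 0" "int_pow u v \<lfloor>ip \<beta> \<gamma>\<rfloor> \<noteq> 1"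
  shows "\<exists>s :: vec \<Rightarrow> 'r. torus_witness \<Lambda> s \<alpha> \<beta>"
proof -
  define s where "s x = int_pow u v \<lfloor>ip x \<gamma>\<rfloor>" for x
  have "s \<in> torus \<Lambda>" unfolding s_def by (rule coroot_character_in_torus[OF assms(1-4)])
  moreover have "centralizes_root s \<alpha>"
    using assms(5) by (simp add: s_def int_pow_def centralizes_root_def root_act_def)
  moreover have "trivial_centralizer_in_root s \<beta>"
    using assms(6) by (simp add: s_def trivial_centralizer_in_root_iff)
  ultimately show ?thesis unfolding torus_witness_def by blast
qed

definition separating_root :: "vec set \<Rightarrow> vec \<Rightarrow> vec \<Rightarrow> bool" where
  "separating_root \<Phi> \<alpha> \<beta> \<longleftrightarrow> (\<exists>\<gamma>\<in>\<Phi>. ip \<gamma> \<gamma> = 2 \<and> ip \<alpha> \<gamma> = 0 \<and> \<bar>ip \<beta> \<gamma>\<bar> = 1)"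

lemma separating_rootI:
  "\<gamma> \<in> \<Phi> \<Longrightarrow> ip \<gamma> \<gamma> = 2 \<Longrightarrow> ip \<alpha> \<gamma> = 0 \<Longrightarrow> \<bar>ip \<beta> \<gamma>\<bar> = 1 \<Longrightarrow> separating_root \<Phi> \<alpha> \<beta>"
  unfolding separating_root_def by blast

lemma torus_witness_of_separating_root:
  assumes "is_group_lattice \<Phi> \<Lambda>" "\<exists>u::'r::idom. u dvd 1 \<and> u \<noteq> 1" "separating_root \<Phi> \<alpha> \<beta>"
  shows "\<exists>s :: vec \<Rightarrow> 'r. torus_witness \<Lambda> s \<alpha> \<beta>"
proof -
  obtain \<gamma> where \<gamma>: "\<gamma> \<in> \<Phi>" "ip \<gamma> \<gamma> = 2" "ip \<alpha> \<gamma> = 0" "\<bar>ip \<beta> \<gamma>\<bar> = 1"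
    using assms(3) unfolding separating_root_def by blast
  obtain u v :: 'r where uv: "u * v = 1" "u \<noteq> 1" using assms(2) by (metis dvdE)
  then have "v \<noteq> 1" by auto
  have "int_pow u v \<lfloor>ip \<beta> \<gamma>\<rfloor> \<noteq> 1"
  proof (cases "ip \<beta> \<gamma> = 1")
    case False
    then have "\<lfloor>ip \<beta> \<gamma>\<rfloor> = - 1" using \<gamma>(4) by (simp add: floor_eq_iff abs_if split: if_splits)
    then show ?thesis using \<open>v \<noteq> 1\<close> by (simp add: int_pow_def)
  qed (use uv in \<open>simp add: int_pow_def\<close>)
  then show ?thesis by (rule torus_witness_of_root[OF assms(1) \<gamma>(1,2) uv(1) \<gamma>(3)])
qed

lemma torus_witness_of_orthogonal_root:
  assumes "is_group_lattice \<Phi> \<Lambda>" "\<beta> \<in> \<Phi>" "ip \<beta> \<beta> = 2" "ip \<alpha> \<beta> = 0"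
    and "{u::'r::idom. u dvd 1} \<noteq> {1, -1}"
  shows "\<exists>s :: vec \<Rightarrow> 'r. torus_witness \<Lambda> s \<alpha> \<beta>"
proof -
  have "{1, -1} \<subseteq> {u::'r. u dvd 1}" by auto
  then obtain u :: 'r where "u dvd 1" "u \<noteq> 1" "u \<noteq> -1" using assms(5) by blast
  moreover from \<open>u dvd 1\<close> obtain v where uv: "u * v = 1" by (metis dvdE)
  ultimately have "u * u \<noteq> 1"
    by (metis add.inverse_inverse mult_cancel_left1 square_eq_1_iff)
  then have "int_pow u v \<lfloor>ip \<beta> \<beta>\<rfloor> \<noteq> 1" using assms(3) by (simp add: int_pow_def power2_eq_square)
  then show ?thesis by (rule torus_witness_of_root[OF assms(1-3) uv assms(4)])
qed

definition signed_pair :: "nat \<Rightarrow> nat \<Rightarrow> real \<Rightarrow> real \<Rightarrow> vec" where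
  "signed_pair i j a b = (\<lambda>k. a * unitv i k + b * unitv j k)"

definition signed_unit :: "nat \<Rightarrow> real \<Rightarrow> vec" where
  "signed_unit i a = (\<lambda>k. a * unitv i k)"

definition half_vec :: "nat \<Rightarrow> vec \<Rightarrow> bool" where
  "half_vec n v \<longleftrightarrow> (\<forall>k<n. v k \<in> {-1/2, 1/2}) \<and> (\<forall>k\<ge>n. v k = 0)"

definition pair_roots_in :: "vec set \<Rightarrow> nat \<Rightarrow> bool" where
  "pair_roots_in \<Phi> n \<longleftrightarrow> (\<forall>i j a b. i \<noteq> j \<longrightarrow> i < n \<longrightarrow> j < n \<longrightarrow> a \<in> {-1, 1} \<longrightarrow> b \<in> {-1, 1} \<longrightarrow>
     signed_pair i j a b \<in> \<Phi>)"

text \<open>Keep equations \<open>x = 1 / 2\<close> as they are, so that the simplifier substitutes coordinates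
  known to be \<open>\<plusminus>1/2\<close> instead of rewriting them to \<open>x * 2 = 1\<close>.\<close>

declare eq_divide_eq_numeral1 [simp del]

lemma signed_pair_apply [simp]:
  "signed_pair i j a b t = (if t = i then a else 0) + (if t = j then b else 0)"
  unfolding signed_pair_def unitv_def by simp

lemma signed_unit_apply [simp]: "signed_unit i a t = (if t = i then a else 0)"
  unfolding signed_unit_def unitv_def by simp

lemma signed_pair_swap: "signed_pair i j a b = signed_pair j i b a"
  unfolding signed_pair_def by (simp add: add.commute)

lemma signed_pair_uminus: "(\<lambda>k. - signed_pair i j a b k) = signed_pair i j (- a) (- b)"
  by auto

lemma ip_commute: "ip v w = ip w v"
  unfolding ip_def by (simp add: mult.commute)

lemma ip_unitv_right: "i < 8 \<Longrightarrow> ip v (\<lambda>k. a * unitv i k) = a * v i"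
  unfolding ip_def unitv_def by (simp add: if_distrib sum.delta' cong: if_cong)

lemma ip_signed_pair_right:
  assumes "i < 8" "j < 8"
  shows "ip v (signed_pair i j a b) = a * v i + b * v j"
proof -
  have "ip v (signed_pair i j a b) = ip v (\<lambda>k. a * unitv i k) + ip v (\<lambda>k. b * unitv j k)"
    unfolding signed_pair_def ip_def by (simp add: distrib_left sum.distrib)
  then show ?thesis using assms by (simp add: ip_unitv_right)
qed

lemma ip_signed_pair_left: "i < 8 \<Longrightarrow> j < 8 \<Longrightarrow> ip (signed_pair i j a b) v = a * v i + b * v j"
  by (simp add: ip_commute ip_signed_pair_right)

lemma sum_lessThan_8: "(\<Sum>k<8::nat. f k) = f 0 + f 1 + f 2 + f 3 + f 4 + f 5 + f 6 + (f 7 :: 'a::comm_monoid_add)"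
  by (simp add: eval_nat_numeral)

lemma prod_lessThan_8: "(\<Prod>k<8::nat. f k) = f 0 * f 1 * f 2 * f 3 * f 4 * f 5 * f 6 * (f 7 :: 'a::comm_monoid_mult)"
  by (simp add: eval_nat_numeral)

lemma lin_indep2_imp_neq:
  assumes "lin_indep2 a b"
  shows "a \<noteq> b" "a \<noteq> (\<lambda>k. - b k)"
proof -
  have "(\<lambda>k. 1 * a k + (-1) * b k) \<noteq> (\<lambda>k. 0)" "(\<lambda>k. 1 * a k + 1 * b k) \<noteq> (\<lambda>k. 0)"
    using assms unfolding lin_indep2_def by (metis one_neq_zero)+
  then show "a \<noteq> b" "a \<noteq> (\<lambda>k. - b k)" by auto
qed

lemma exists_fresh_index:
  assumes "length xs < n"
  obtains m where "m < n" "m \<notin> set xs"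
proof -
  have "\<not> {..<n} \<subseteq> set xs" using card_mono[of "set xs" "{..<n}"] card_length[of xs] assms by fastforce
  then show ?thesis using that by blast
qed

lemma lin_indep2_imp_neq_sign_multiple:
  assumes "lin_indep2 \<alpha> \<beta>" "\<epsilon> \<in> {-1, 1}"
  shows "\<beta> \<noteq> (\<lambda>t. \<epsilon> * \<alpha> t)"
  using lin_indep2_imp_neq[OF assms(1)] assms(2) by auto

lemma half_vec_sq: "half_vec n v \<Longrightarrow> k < n \<Longrightarrow> v k * v k = 1 / 4"
  unfolding half_vec_def by auto

lemma half_vec_ip_self:
  assumes "half_vec n v" "n \<le> 8"
  shows "ip v v = n / 4"
proof -
  have "ip v v = (\<Sum>k<8. if k < n then 1 / 4 else 0)"
    unfolding ip_def using assms(1)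
    by (intro sum.cong) (auto simp: half_vec_def)
  also have "\<dots> = (\<Sum>k<n. 1 / 4)"
  proof -
    have "{..<8} \<inter> {k. k < n} = {..<n}" using assms(2) by auto
    then show ?thesis by (simp add: sum.If_cases)
  qed
  finally show ?thesis by simp
qed

lemma prod_double_eq_minus_one_power:
  fixes n :: nat and v :: vec
  assumes "\<forall>k<n. v k \<in> {-1/2, 1/2}"
  shows "(\<Prod>k<n. 2 * v k) = (-1) ^ card {k. k < n \<and> v k < 0}"
  using assms
proof (induction n)
  case (Suc n)
  have "{k. k < Suc n \<and> v k < 0} = (if v n < 0 then insert n else id) {k. k < n \<and> v k < 0}"
    by (auto simp: less_Suc_eq)
  then show ?case using Suc by auto
qed simp

lemma even_card_negatives_iff:
  fixes n :: nat and v :: vec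
  assumes "\<forall>k<n. v k \<in> {-1/2, 1/2}"
  shows "even (card {k. k < n \<and> v k < 0}) \<longleftrightarrow> (\<Prod>k<n. 2 * v k) = 1"
  by (simp add: prod_double_eq_minus_one_power[OF assms] minus_one_power_iff)

lemma half_vec_sign_change:
  assumes "half_vec n v"
  shows "half_vec n (\<lambda>t. if P t then - v t else v t)"
proof -
  have "- v k \<in> {-1/2, 1/2}" if "k < n" for k using assms that unfolding half_vec_def by auto
  then show ?thesis using assms unfolding half_vec_def by auto
qed

lemma half_vec_agree_disagree:
  assumes "half_vec n \<alpha>" "half_vec n \<beta>" "lin_indep2 \<alpha> \<beta>"
  obtains k m where "k < n" "m < n" "\<beta> k = \<alpha> k" "\<beta> m = - \<alpha> m"
proof -
  have pm: "\<beta> k = \<alpha> k \<or> \<beta> k = - \<alpha> k" if "k < n" for k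
  proof -
    have "\<alpha> k \<in> {-1/2, 1/2}" "\<beta> k \<in> {-1/2, 1/2}" using assms(1,2) that unfolding half_vec_def by auto
    then show ?thesis by auto
  qed
  have out: "\<alpha> k = 0" "\<beta> k = 0" if "n \<le> k" for k
    using assms(1,2) that unfolding half_vec_def by auto
  have "\<exists>k<n. \<beta> k = \<alpha> k"
  proof (rule ccontr)
    assume "\<not> ?thesis"
    then have "\<alpha> k = - \<beta> k" for k using pm[of k] out[of k] by (cases "k < n") auto
    then have "\<alpha> = (\<lambda>k. - \<beta> k)" by blast
    then show False using lin_indep2_imp_neq(2)[OF assms(3)] by simp
  qed
  moreover have "\<exists>m<n. \<beta> m = - \<alpha> m"
  proof (rule ccontr)
    assume "\<not> ?thesis"
    then have "\<alpha> k = \<beta> k" for k using pm[of k] out[of k] by (cases "k < n") auto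
    then have "\<alpha> = \<beta>" by blast
    then show False using lin_indep2_imp_neq(1)[OF assms(3)] by simp
  qed
  ultimately show ?thesis using that by blast
qed

lemma half_vec_same_or_opposite:
  assumes "half_vec 8 \<alpha>" "half_vec 8 \<beta>" "n \<le> 8"
    and "\<not> (\<exists>k<n. \<exists>m<n. \<beta> k = \<alpha> k \<and> \<beta> m = - \<alpha> m)"
  obtains \<epsilon> where "\<epsilon> \<in> {-1, 1}" "\<And>t. t < n \<Longrightarrow> \<beta> t = \<epsilon> * \<alpha> t"
proof -
  have "\<beta> t = \<alpha> t \<or> \<beta> t = - \<alpha> t" if "t < n" for t
  proof -
    have "\<alpha> t \<in> {-1/2, 1/2}" "\<beta> t \<in> {-1/2, 1/2}" using assms(1-3) that unfolding half_vec_def by auto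
    then show ?thesis by auto
  qed
  then have "(\<forall>t<n. \<beta> t = 1 * \<alpha> t) \<or> (\<forall>t<n. \<beta> t = -1 * \<alpha> t)" using assms(4) by auto
  then show ?thesis using that by blast
qed

section \<open>Separating roots of the form \<open>\<plusminus>e\<^sub>k \<plusminus> e\<^sub>m\<close>\<close>

lemma separating_root_of_pair:
  assumes "pair_roots_in \<Phi> n" "n \<le> 8" "k \<noteq> m" "k < n" "m < n" "x \<in> {-1, 1}" "y \<in> {-1, 1}"
    and "x * \<alpha> k + y * \<alpha> m = 0" "\<bar>x * \<beta> k + y * \<beta> m\<bar> = 1"
  shows "separating_root \<Phi> \<alpha> \<beta>"
  unfolding separating_root_def
proof (intro bexI conjI)
  show "signed_pair k m x y \<in> \<Phi>" using assms(1,3-7) unfolding pair_roots_in_def by blast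
  show "ip (signed_pair k m x y) (signed_pair k m x y) = 2"
    using assms(2-7) by (auto simp: ip_signed_pair_left)
qed (use assms(2,4,5,8,9) in \<open>simp_all add: ip_signed_pair_right\<close>)

lemma separating_root_fresh_coordinate:
  assumes "pair_roots_in \<Phi> n" "n \<le> 8" "length xs < n" "k \<in> set xs" "k < n"
    and "\<alpha> k = 0" "\<beta> k \<in> {-1, 1}" "\<And>t. t \<notin> set xs \<Longrightarrow> \<alpha> t = 0 \<and> \<beta> t = 0"
  shows "separating_root \<Phi> \<alpha> \<beta>"
proof -
  obtain m where "m < n" "m \<notin> set xs" using exists_fresh_index assms(3) .
  then show ?thesis
    using assms by (intro separating_root_of_pair[where k = k and m = m and x = 1 and y = 1]) auto
qed

lemma separating_root_half_right:
  assumes "pair_roots_in \<Phi> n" "n \<le> 8" "length xs + 2 \<le> n"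
    and "\<And>t. t \<notin> set xs \<Longrightarrow> \<alpha> t = 0" "\<And>t. t < n \<Longrightarrow> \<beta> t \<in> {-1/2, 1/2}"
  shows "separating_root \<Phi> \<alpha> \<beta>"
proof -
  obtain k where k: "k < n" "k \<notin> set xs" using exists_fresh_index[of xs n] assms(3) by auto
  obtain m where m: "m < n" "m \<notin> set (k # xs)" using exists_fresh_index[of "k # xs" n] assms(3) by auto
  show ?thesis
  proof (rule separating_root_of_pair[where k = k and m = m and x = 1 and y = "4 * \<beta> k * \<beta> m"])
    show "4 * \<beta> k * \<beta> m \<in> {-1, 1}" "\<bar>1 * \<beta> k + 4 * \<beta> k * \<beta> m * \<beta> m\<bar> = 1"
      using assms(5)[OF k(1)] assms(5)[OF m(1)] by auto
  qed (use assms k m in auto)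
qed

lemma separating_root_half_left:
  assumes "pair_roots_in \<Phi> n" "n \<le> 8" "length xs < n" "k \<in> set xs" "k < n"
    and "\<And>t. t < n \<Longrightarrow> \<alpha> t \<in> {-1/2, 1/2}" "\<beta> k \<in> {-1, 1}" "\<And>t. t \<notin> set xs \<Longrightarrow> \<beta> t = 0"
  shows "separating_root \<Phi> \<alpha> \<beta>"
proof -
  obtain m where m: "m < n" "m \<notin> set xs" using exists_fresh_index assms(3) .
  show ?thesis
  proof (rule separating_root_of_pair[where k = k and m = m and x = 1 and y = "- 4 * \<alpha> k * \<alpha> m"])
    show "- 4 * \<alpha> k * \<alpha> m \<in> {-1, 1}" "1 * \<alpha> k + - 4 * \<alpha> k * \<alpha> m * \<alpha> m = 0"
      using assms(6)[OF assms(5)] assms(6)[OF m(1)] by auto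
  qed (use assms m in auto)
qed

lemma separating_root_agree_disagree:
  assumes "pair_roots_in \<Phi> n" "n \<le> 8" "\<And>t. t < n \<Longrightarrow> \<alpha> t \<in> {-1/2, 1/2}"
    and "k < n" "m < n" "\<beta> k = \<alpha> k" "\<beta> m = - \<alpha> m"
  shows "separating_root \<Phi> \<alpha> \<beta>"
proof (rule separating_root_of_pair[where k = k and m = m and x = 1 and y = "- 4 * \<alpha> k * \<alpha> m"])
  show "k \<noteq> m" using assms(3)[OF assms(4)] assms(6,7) by auto
  show "- 4 * \<alpha> k * \<alpha> m \<in> {-1, 1}" "1 * \<alpha> k + - 4 * \<alpha> k * \<alpha> m * \<alpha> m = 0"
    "\<bar>1 * \<beta> k + - 4 * \<alpha> k * \<alpha> m * \<beta> m\<bar> = 1"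
    using assms(3)[OF assms(4)] assms(3)[OF assms(5)] assms(6,7) by auto
qed (use assms in auto)

lemma separating_root_long_pair:
  assumes "pair_roots_in \<Phi> n" "n \<le> 8" "k \<noteq> m" "k < n" "m < n"
    and "\<alpha> k \<in> {-1, 1}" "\<alpha> m \<in> {-1, 1}" "\<beta> k \<in> {-1, 1}" "\<beta> m = 0"
  shows "separating_root \<Phi> \<alpha> \<beta>"
  by (rule separating_root_of_pair[where k = k and m = m and x = 1 and y = "- \<alpha> k * \<alpha> m"])
    (use assms in auto)

lemma separating_root_pair_pair:
  assumes "pair_roots_in \<Phi> n" "n \<le> 8" "i \<noteq> j" "k \<noteq> l" "k < n" "l < n"
    and "a \<in> {-1, 1}" "b \<in> {-1, 1}" "c \<in> {-1, 1}" "d \<in> {-1, 1}"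
    and "\<not> {k, l} \<subseteq> {i, j}" "4 < n"
  shows "separating_root \<Phi> (signed_pair i j a b) (signed_pair k l c d)"
proof -
  have zero: "signed_pair i j a b t = 0 \<and> signed_pair k l c d t = 0" if "t \<notin> set [i, j, k, l]" for t
    using that by simp
  show ?thesis
  proof (cases "k \<in> {i, j}")
    case False
    show ?thesis
      by (rule separating_root_fresh_coordinate[OF assms(1,2), of "[i, j, k, l]" k])
        (use False assms zero in auto)
  next
    case True
    then have "l \<notin> {i, j}" using assms(11) by auto
    show ?thesis
      by (rule separating_root_fresh_coordinate[OF assms(1,2), of "[i, j, k, l]" l])
        (use \<open>l \<notin> {i, j}\<close> assms zero in auto)
  qed
qed

lemma signed_pair_same_support:
  assumes "lin_indep2 (signed_pair i j a b) (signed_pair i j c d)" "i \<noteq> j"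
    and "a \<in> {-1, 1}" "b \<in> {-1, 1}" "c \<in> {-1, 1}" "d \<in> {-1, 1}"
  shows "(c = a \<and> d = - b) \<or> (c = - a \<and> d = b)"
proof -
  have "\<not> (c = a \<and> d = b)" "\<not> (c = - a \<and> d = - b)"
    using lin_indep2_imp_neq[OF assms(1)] by (auto simp: signed_pair_uminus)
  then show ?thesis using assms(3-6) by auto
qed

lemma separating_root_same_support:
  assumes "\<gamma> \<in> \<Phi>" "ip \<gamma> \<gamma> = 2" "\<gamma> i = a / 2" "\<gamma> j = - b / 2"
    and "lin_indep2 (signed_pair i j a b) (signed_pair i j c d)" "i \<noteq> j" "i < 8" "j < 8"
    and "a \<in> {-1, 1}" "b \<in> {-1, 1}" "c \<in> {-1, 1}" "d \<in> {-1, 1}"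
  shows "separating_root \<Phi> (signed_pair i j a b) (signed_pair i j c d)"
  unfolding separating_root_def
proof (intro bexI conjI)
  show "ip (signed_pair i j a b) \<gamma> = 0" "\<bar>ip (signed_pair i j c d) \<gamma>\<bar> = 1"
    using signed_pair_same_support[OF assms(5,6,9-12)] assms(3,4,7-10)
    by (auto simp: ip_signed_pair_left)
qed (use assms(1,2) in auto)

lemma separating_root_pairs:
  assumes "pair_roots_in \<Phi> n" "n \<le> 8" "4 < n" "i < j" "j < 8" "k < l" "l < n"
    and "a \<in> {-1, 1}" "b \<in> {-1, 1}" "c \<in> {-1, 1}" "d \<in> {-1, 1}"
    and "lin_indep2 (signed_pair i j a b) (signed_pair k l c d)"
    and "\<gamma> \<in> \<Phi>" "ip \<gamma> \<gamma> = 2" "\<gamma> i = a / 2" "\<gamma> j = - b / 2"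
  shows "separating_root \<Phi> (signed_pair i j a b) (signed_pair k l c d)"
proof (cases "{k, l} \<subseteq> {i, j}")
  case True
  then have "k = i" "l = j" using assms(4,6) by auto
  then show ?thesis
    using separating_root_same_support[OF assms(13-16)] assms(4,5,8-12) by simp
next
  case False
  then show ?thesis using assms(1-11) by (intro separating_root_pair_pair) auto
qed

section \<open>E8\<close>

lemma E8_roots_cases:
  assumes "v \<in> E8_roots"
  obtains i j a b where "i < j" "j < 8" "a \<in> {-1, 1}" "b \<in> {-1, 1}" "v = signed_pair i j a b"
  | "half_vec 8 v" "(\<Prod>k<8. 2 * v k) = 1"
proof -
  consider (pair) "\<exists>i j a b. i < j \<and> j < 8 \<and> a \<in> {-1, 1} \<and> b \<in> {-1, 1} \<and> v = signed_pair i j a b"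
    | (half) "\<forall>k<8. v k \<in> {1/2, -1/2}" "\<forall>k\<ge>8. v k = 0" "even (card {k. k < 8 \<and> v k < 0})"
    using assms unfolding E8_roots_def signed_pair_def by blast
  then show ?thesis
  proof cases
    case half
    then have "\<forall>k<8. v k \<in> {-1/2, 1/2}" by auto
    then show ?thesis using that(2) half even_card_negatives_iff[of 8 v] by (simp add: half_vec_def)
  qed (use that(1) in blast)
qed

lemma half_vec_in_E8_roots:
  assumes "half_vec 8 v" "(\<Prod>k<8. 2 * v k) = 1"
  shows "v \<in> E8_roots"
proof -
  have "\<forall>k<8. v k \<in> {-1/2, 1/2}" "\<forall>k\<ge>8. v k = 0" using assms(1) unfolding half_vec_def by auto
  moreover from this(1) have "\<forall>k<8. v k \<in> {1/2, -1/2}" by auto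
  ultimately show ?thesis using assms(2) even_card_negatives_iff[of 8 v] unfolding E8_roots_def by blast
qed

lemma pair_roots_in_E8: "pair_roots_in E8_roots 8"
  unfolding pair_roots_in_def
proof (intro allI impI)
  fix i j :: nat and a b :: real
  assume "i \<noteq> j" "i < 8" "j < 8" "a \<in> {-1, 1}" "b \<in> {-1, 1}"
  then have "\<exists>i' j' a' b'. i' < j' \<and> j' < 8 \<and> a' \<in> {-1, 1} \<and> b' \<in> {-1, 1} \<and>
      signed_pair i j a b = signed_pair i' j' a' b'"
    by (metis linorder_neqE_nat signed_pair_swap)
  then show "signed_pair i j a b \<in> E8_roots" unfolding E8_roots_def signed_pair_def by blast
qed

lemma E8_root_norm: "v \<in> E8_roots \<Longrightarrow> ip v v = 2"
  by (erule E8_roots_cases) (auto simp: ip_signed_pair_left half_vec_ip_self)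

lemma E8_half_root_exists:
  assumes "distinct [i, j, p, q]" "i < 8" "j < 8" "p < 8" "q < 8" "a \<in> {-1, 1}" "b \<in> {-1, 1}"
  obtains \<gamma> where "\<gamma> \<in> E8_roots" "\<gamma> i = a / 2" "\<gamma> j = - b / 2" "\<gamma> q = - 1 / 2"
    "\<And>t. t < 8 \<Longrightarrow> t \<notin> {i, j, p, q} \<Longrightarrow> \<gamma> t = 1 / 2"
proof -
  \<comment> \<open>the value at p makes the product of the signs equal to 1\<close>
  define \<gamma> where "\<gamma> t = (if 8 \<le> t then 0 else if t = i then a / 2 else if t = j then - b / 2
    else if t = p then a * b / 2 else if t = q then - 1 / 2 else 1 / 2)" for t
  have "half_vec 8 \<gamma>" using assms(6,7) unfolding half_vec_def \<gamma>_def by auto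
  moreover have "(\<Prod>t<8. 2 * \<gamma> t) = (\<Prod>t\<in>{i, j, p, q}. 2 * \<gamma> t)"
    using assms(2-5) by (intro prod.mono_neutral_right) (auto simp: \<gamma>_def)
  moreover have "\<dots> = 1" using assms by (auto simp: \<gamma>_def)
  ultimately have "\<gamma> \<in> E8_roots" by (intro half_vec_in_E8_roots) simp_all
  then show ?thesis using that assms by (auto simp: \<gamma>_def)
qed

lemma E8_half_root_for_pair:
  assumes "i < j" "j < 8" "a \<in> {-1, 1}" "b \<in> {-1, 1}"
  obtains \<gamma> where "\<gamma> \<in> E8_roots" "\<gamma> i = a / 2" "\<gamma> j = - b / 2"
proof -
  obtain p where p: "p < 8" "p \<notin> set [i, j]" using exists_fresh_index[of "[i, j]" 8] by auto
  obtain q where q: "q < 8" "q \<notin> set [i, j, p]" using exists_fresh_index[of "[i, j, p]" 8] by auto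
  have "distinct [i, j, p, q]" "i < 8" using assms(1,2) p q by auto
  then show ?thesis using E8_half_root_exists assms(2-4) p(1) q(1) that by blast
qed

lemma E8_separating_root:
  assumes "\<alpha> \<in> E8_roots" "\<beta> \<in> E8_roots" "lin_indep2 \<alpha> \<beta>"
  shows "separating_root E8_roots \<alpha> \<beta>"
  using assms(1)
proof (cases rule: E8_roots_cases)
  case \<alpha>: (1 i j a b)
  show ?thesis
    using assms(2)
  proof (cases rule: E8_roots_cases)
    case \<beta>: (1 k l c d)
    obtain \<gamma> where "\<gamma> \<in> E8_roots" "\<gamma> i = a / 2" "\<gamma> j = - b / 2"
      using E8_half_root_for_pair \<alpha>(1-4) .
    then show ?thesis
      unfolding \<alpha>(5) \<beta>(5) using \<alpha> \<beta> assms(3) E8_root_norm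
      by (intro separating_root_pairs[OF pair_roots_in_E8, where \<gamma> = \<gamma>]) auto
  next
    case \<beta>: 2
    show ?thesis
      by (rule separating_root_half_right[OF pair_roots_in_E8, of "[i, j]"])
        (use \<alpha> \<beta> in \<open>auto simp: half_vec_def\<close>)
  qed
next
  case \<alpha>: 2
  show ?thesis
    using assms(2)
  proof (cases rule: E8_roots_cases)
    case \<beta>: (1 k l c d)
    show ?thesis
      by (rule separating_root_half_left[OF pair_roots_in_E8, of "[k, l]" k])
        (use \<alpha> \<beta> in \<open>auto simp: half_vec_def\<close>)
  next
    case \<beta>: 2
    obtain k m where "k < 8" "m < 8" "\<beta> k = \<alpha> k" "\<beta> m = - \<alpha> m"
      using half_vec_agree_disagree[OF \<alpha>(1) \<beta>(1) assms(3)] .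
    then show ?thesis
      using \<alpha> by (intro separating_root_agree_disagree[OF pair_roots_in_E8]) (auto simp: half_vec_def)
  qed
qed

section \<open>E7 and E6\<close>

lemma ip_unitv_sum: "ip v (\<lambda>k. unitv i k + unitv j k) = v i + v j" if "i < 8" "j < 8"
  using ip_signed_pair_right[OF that, of v 1 1] by (simp add: signed_pair_def)

lemma E7_roots_iff: "v \<in> E7_roots \<longleftrightarrow> v \<in> E8_roots \<and> v 6 + v 7 = 0"
  unfolding E7_roots_def by (simp add: ip_unitv_sum)

lemma E6_roots_iff: "v \<in> E6_roots \<longleftrightarrow> v \<in> E8_roots \<and> v 6 + v 7 = 0 \<and> v 5 + v 7 = 0"
  unfolding E6_roots_def E7_roots_iff by (auto simp: ip_unitv_sum)

lemma E7_roots_cases: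
  assumes "v \<in> E7_roots"
  obtains i j a b where "i < j" "j < 6" "a \<in> {-1, 1}" "b \<in> {-1, 1}" "v = signed_pair i j a b"
  | a where "a \<in> {-1, 1}" "v = signed_pair 6 7 a (- a)"
  | "half_vec 8 v" "(\<Prod>k<8. 2 * v k) = 1" "v 6 + v 7 = 0"
proof -
  have v: "v \<in> E8_roots" "v 6 + v 7 = 0" using assms unfolding E7_roots_iff by auto
  from v(1) show ?thesis
  proof (cases rule: E8_roots_cases)
    case (1 i j a b)
    then have "j < 6 \<or> (i = 6 \<and> j = 7 \<and> b = - a)" using v(2) by (auto split: if_splits)
    then show ?thesis using that 1 by blast
  qed (use that v(2) in blast)
qed

lemma E6_roots_cases:
  assumes "v \<in> E6_roots"
  obtains i j a b where "i < j" "j < 5" "a \<in> {-1, 1}" "b \<in> {-1, 1}" "v = signed_pair i j a b"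
  | "half_vec 8 v" "(\<Prod>k<8. 2 * v k) = 1" "v 6 + v 7 = 0" "v 5 + v 7 = 0"
proof -
  have v: "v \<in> E8_roots" "v 6 + v 7 = 0" "v 5 + v 7 = 0" using assms unfolding E6_roots_iff by auto
  from v(1) show ?thesis
  proof (cases rule: E8_roots_cases)
    case (1 i j a b)
    then have "j < 5" using v(2,3) by (auto split: if_splits)
    then show ?thesis using that 1 by blast
  qed (use that v(2,3) in blast)
qed

lemma pair_roots_in_E7: "pair_roots_in E7_roots 6"
  using pair_roots_in_E8 unfolding pair_roots_in_def E7_roots_iff by auto

lemma pair_roots_in_E6: "pair_roots_in E6_roots 5"
  using pair_roots_in_E8 unfolding pair_roots_in_def E6_roots_iff by auto

lemma E7_half_root_exists:
  assumes "i \<noteq> j" "i < 6" "j < 6" "a \<in> {-1, 1}" "b \<in> {-1, 1}"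
  obtains \<gamma> where "\<gamma> \<in> E7_roots" "\<gamma> i = a / 2" "\<gamma> j = - b / 2" "\<gamma> 6 = 1 / 2" "\<gamma> 7 = - 1 / 2"
proof -
  obtain p where "p < 5" "p \<notin> set [i, j]" using exists_fresh_index[of "[i, j]" 5] by auto
  moreover have "distinct [i, j, p, 7]" using assms(1-3) calculation by auto
  ultimately obtain \<gamma> where "\<gamma> \<in> E8_roots" "\<gamma> i = a / 2" "\<gamma> j = - b / 2" "\<gamma> 7 = - 1 / 2"
      "\<And>t. t < 8 \<Longrightarrow> t \<notin> {i, j, p, 7} \<Longrightarrow> \<gamma> t = 1 / 2"
    using E8_half_root_exists[of i j p 7 a b] assms(2-5) by auto
  moreover have "\<gamma> 6 = 1 / 2" using calculation(5)[of 6] assms \<open>p < 5\<close> by auto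
  moreover from calculation have "\<gamma> \<in> E7_roots" by (simp add: E7_roots_iff)
  ultimately show ?thesis using that by blast
qed

lemma E6_half_root_exists:
  assumes "i \<noteq> j" "i < 5" "j < 5" "a \<in> {-1, 1}" "b \<in> {-1, 1}"
  obtains \<gamma> where "\<gamma> \<in> E6_roots" "\<gamma> i = a / 2" "\<gamma> j = - b / 2"
proof -
  obtain p where "p < 5" "p \<notin> set [i, j]" using exists_fresh_index[of "[i, j]" 5] by auto
  moreover have "distinct [i, j, p, 7]" using assms(1-3) calculation by auto
  ultimately obtain \<gamma> where "\<gamma> \<in> E8_roots" "\<gamma> i = a / 2" "\<gamma> j = - b / 2" "\<gamma> 7 = - 1 / 2"
      "\<And>t. t < 8 \<Longrightarrow> t \<notin> {i, j, p, 7} \<Longrightarrow> \<gamma> t = 1 / 2"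
    using E8_half_root_exists[of i j p 7 a b] assms(2-5) by auto
  moreover have "\<gamma> 6 = 1 / 2" "\<gamma> 5 = 1 / 2" using calculation(5)[of 6] calculation(5)[of 5] assms \<open>p < 5\<close> by auto
  moreover from calculation have "\<gamma> \<in> E6_roots" by (simp add: E6_roots_iff)
  ultimately show ?thesis using that by blast
qed

definition sign_change_0167 :: "vec \<Rightarrow> vec" where
  "sign_change_0167 v = (\<lambda>t. if t \<in> {0, 1, 6, 7} then - v t else v t)"

lemma ip_sign_change_0167:
  "ip w (sign_change_0167 v) = ip w v - 2 * (w 0 * v 0 + w 1 * v 1 + w 6 * v 6 + w 7 * v 7)"
  unfolding ip_def sum_lessThan_8 sign_change_0167_def by simp

lemma E7_sign_change_0167:
  assumes "half_vec 8 v" "(\<Prod>k<8. 2 * v k) = 1" "v 6 + v 7 = 0"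
  shows "sign_change_0167 v \<in> E7_roots" "ip v (sign_change_0167 v) = 0"
proof -
  have "half_vec 8 (sign_change_0167 v)"
    unfolding sign_change_0167_def by (rule half_vec_sign_change[OF assms(1)])
  moreover have "(\<Prod>k<8. 2 * sign_change_0167 v k) = (\<Prod>k<8. 2 * v k)"
    unfolding prod_lessThan_8 sign_change_0167_def by simp
  ultimately show "sign_change_0167 v \<in> E7_roots"
    using assms(2,3) half_vec_in_E8_roots by (simp add: E7_roots_iff sign_change_0167_def)
  show "ip v (sign_change_0167 v) = 0"
    using half_vec_sq[OF assms(1)] by (simp add: ip_sign_change_0167 half_vec_ip_self[OF assms(1)])
qed

lemma E7_separating_root_sign_multiple:
  assumes \<alpha>: "half_vec 8 \<alpha>" "(\<Prod>k<8. 2 * \<alpha> k) = 1" "\<alpha> 6 + \<alpha> 7 = 0"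
    and \<beta>: "half_vec 8 \<beta>" "\<beta> 6 + \<beta> 7 = 0"
    and "lin_indep2 \<alpha> \<beta>" "\<epsilon> \<in> {-1, 1}" "\<And>t. t < 6 \<Longrightarrow> \<beta> t = \<epsilon> * \<alpha> t"
  shows "separating_root E7_roots \<alpha> \<beta>"
proof -
  have "\<beta> 6 \<noteq> \<epsilon> * \<alpha> 6"
  proof
    assume "\<beta> 6 = \<epsilon> * \<alpha> 6"
    moreover have "\<beta> t = \<epsilon> * \<alpha> t" if "8 \<le> t" for t using \<alpha>(1) \<beta>(1) that by (simp add: half_vec_def)
    moreover have "\<alpha> 7 = - \<alpha> 6" "\<beta> 7 = - \<beta> 6" using \<alpha>(3) \<beta>(2) by simp_all
    ultimately have "\<beta> t = \<epsilon> * \<alpha> t" for t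
      using assms(8) by (cases "t < 6"; cases "t = 6"; cases "t = 7") (auto simp: algebra_simps)
    then show False using lin_indep2_imp_neq_sign_multiple[OF assms(6,7)] by blast
  qed
  moreover have "\<alpha> 6 \<in> {-1/2, 1/2}" "\<beta> 6 \<in> {-1/2, 1/2}" using \<alpha>(1) \<beta>(1) by (auto simp: half_vec_def)
  ultimately have \<beta>67: "\<beta> 6 = - \<epsilon> * \<alpha> 6" "\<beta> 7 = - \<epsilon> * \<alpha> 7" using assms(7) \<alpha>(3) \<beta>(2) by auto
  have "\<beta> t * sign_change_0167 \<alpha> t = (if t \<in> {0, 1} then - \<epsilon> / 4 else \<epsilon> / 4)" if "t < 8" for t
  proof -
    have "\<beta> t = (if t < 6 then \<epsilon> else - \<epsilon>) * \<alpha> t"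
      using that assms(8) \<beta>67 by (auto simp: less_Suc_eq numeral_eq_Suc)
    then show ?thesis
      using half_vec_sq[OF \<alpha>(1) that] that by (auto simp: sign_change_0167_def algebra_simps)
  qed
  then have "ip \<beta> (sign_change_0167 \<alpha>) = \<epsilon>" unfolding ip_def sum_lessThan_8 by simp
  then show ?thesis
    using E7_sign_change_0167[OF \<alpha>] assms(7) E8_root_norm E7_roots_iff
    by (intro separating_rootI[of "sign_change_0167 \<alpha>"]) auto
qed

lemma E7_separating_root_half_half:
  assumes \<alpha>: "half_vec 8 \<alpha>" "(\<Prod>k<8. 2 * \<alpha> k) = 1" "\<alpha> 6 + \<alpha> 7 = 0"
    and \<beta>: "half_vec 8 \<beta>" "\<beta> 6 + \<beta> 7 = 0" and "lin_indep2 \<alpha> \<beta>"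
  shows "separating_root E7_roots \<alpha> \<beta>"
proof (cases "\<exists>k<6. \<exists>m<6. \<beta> k = \<alpha> k \<and> \<beta> m = - \<alpha> m")
  case True
  then obtain k m where "k < 6" "m < 6" "\<beta> k = \<alpha> k" "\<beta> m = - \<alpha> m" by blast
  then show ?thesis
    using \<alpha>(1) by (intro separating_root_agree_disagree[OF pair_roots_in_E7]) (auto simp: half_vec_def)
next
  case False
  moreover have "(6::nat) \<le> 8" by simp
  ultimately obtain \<epsilon> where "\<epsilon> \<in> {-1, 1}" "\<And>t. t < 6 \<Longrightarrow> \<beta> t = \<epsilon> * \<alpha> t"
    using half_vec_same_or_opposite[OF \<alpha>(1) \<beta>(1)] by blast
  then show ?thesis using E7_separating_root_sign_multiple \<alpha> \<beta> assms(6) by blast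
qed

lemma E7_separating_root_of_pair:
  assumes \<alpha>: "i < j" "j < 6" "a \<in> {-1, 1}" "b \<in> {-1, 1}" "\<alpha> = signed_pair i j a b"
    and "\<beta> \<in> E7_roots" "lin_indep2 \<alpha> \<beta>"
  shows "separating_root E7_roots \<alpha> \<beta>"
proof -
  have "i \<noteq> j" "i < 6" using \<alpha>(1,2) by simp_all
  then obtain \<gamma> where \<gamma>: "\<gamma> \<in> E7_roots" "\<gamma> i = a / 2" "\<gamma> j = - b / 2" "\<gamma> 6 = 1 / 2" "\<gamma> 7 = - 1 / 2"
    using E7_half_root_exists \<alpha>(2-4) by blast
  show ?thesis
    using assms(6)
  proof (cases rule: E7_roots_cases)
    case \<beta>: (1 k l c d)
    show ?thesis
      unfolding \<alpha>(5) \<beta>(5) using \<alpha> \<beta> \<gamma> assms(7)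
      by (intro separating_root_pairs[OF pair_roots_in_E7, where \<gamma> = \<gamma>])
        (auto simp: E7_roots_iff E8_root_norm)
  next
    case \<beta>: (2 c)
    show ?thesis
      by (rule separating_rootI[OF \<gamma>(1)])
        (use \<alpha> \<beta> \<gamma> in \<open>auto simp: E7_roots_iff E8_root_norm ip_signed_pair_left\<close>)
  next
    case \<beta>: 3
    show ?thesis
      by (rule separating_root_half_right[OF pair_roots_in_E7, of "[i, j]"])
        (use \<alpha> \<beta> in \<open>auto simp: half_vec_def\<close>)
  qed
qed

lemma E7_separating_root:
  assumes "\<alpha> \<in> E7_roots" "\<beta> \<in> E7_roots" "lin_indep2 \<alpha> \<beta>"
  shows "separating_root E7_roots \<alpha> \<beta>"
  using assms(1)
proof (cases rule: E7_roots_cases)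
  case (1 i j a b)
  then show ?thesis using E7_separating_root_of_pair assms(2,3) by blast
next
  case \<alpha>: (2 a)
  show ?thesis
    using assms(2)
  proof (cases rule: E7_roots_cases)
    case \<beta>: (1 k l c d)
    show ?thesis
      unfolding \<alpha>(2) \<beta>(5) using \<alpha> \<beta>
      by (intro separating_root_pair_pair[OF pair_roots_in_E7]) auto
  next
    case \<beta>: (2 c)
    have "lin_indep2 (signed_pair 6 7 a (- a)) (signed_pair 6 7 c (- c))" using assms(3) \<alpha> \<beta> by simp
    from signed_pair_same_support[OF this] show ?thesis using \<alpha>(1) \<beta>(1) by auto
  next
    case \<beta>: 3
    show ?thesis
      by (rule separating_root_half_right[OF pair_roots_in_E7, of "[6, 7]"])
        (use \<alpha> \<beta> in \<open>auto simp: half_vec_def\<close>)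
  qed
next
  case \<alpha>: 3
  show ?thesis
    using assms(2)
  proof (cases rule: E7_roots_cases)
    case \<beta>: (1 k l c d)
    show ?thesis
      by (rule separating_root_half_left[OF pair_roots_in_E7, of "[k, l]" k])
        (use \<alpha> \<beta> in \<open>auto simp: half_vec_def\<close>)
  next
    case \<beta>: (2 c)
    have "\<alpha> 6 \<in> {-1/2, 1/2}" using \<alpha>(1) by (simp add: half_vec_def)
    then have "\<bar>ip \<beta> (sign_change_0167 \<alpha>)\<bar> = 1"
      using \<alpha>(3) \<beta> by (auto simp: ip_signed_pair_left sign_change_0167_def)
    then show ?thesis
      using E7_sign_change_0167[OF \<alpha>] E7_roots_iff E8_root_norm
      by (intro separating_rootI[of "sign_change_0167 \<alpha>"]) auto
  next
    case \<beta>: 3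
    show ?thesis using E7_separating_root_half_half \<alpha> \<beta>(1,3) assms(3) by blast
  qed
qed

lemma E6_half_roots_not_sign_multiple:
  assumes \<alpha>: "half_vec 8 \<alpha>" "(\<Prod>k<8. 2 * \<alpha> k) = 1" "\<alpha> 6 + \<alpha> 7 = 0" "\<alpha> 5 + \<alpha> 7 = 0"
    and \<beta>: "half_vec 8 \<beta>" "(\<Prod>k<8. 2 * \<beta> k) = 1" "\<beta> 6 + \<beta> 7 = 0" "\<beta> 5 + \<beta> 7 = 0"
    and "lin_indep2 \<alpha> \<beta>" "\<epsilon> \<in> {-1, 1}" "\<And>t. t < 5 \<Longrightarrow> \<beta> t = \<epsilon> * \<alpha> t"
  shows False
proof -
  have \<alpha>567: "\<alpha> 5 = - \<alpha> 7" "\<alpha> 6 = - \<alpha> 7" and \<beta>567: "\<beta> 5 = - \<beta> 7" "\<beta> 6 = - \<beta> 7"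
    using \<alpha>(3,4) \<beta>(3,4) by simp_all
  have "\<beta> 7 \<noteq> \<epsilon> * \<alpha> 7"
  proof
    assume "\<beta> 7 = \<epsilon> * \<alpha> 7"
    moreover have "\<beta> t = \<epsilon> * \<alpha> t" if "8 \<le> t" for t using \<alpha>(1) \<beta>(1) that by (simp add: half_vec_def)
    ultimately have "\<beta> t = \<epsilon> * \<alpha> t" for t
      using assms(11) \<alpha>567 \<beta>567
      by (cases "t < 5"; cases "t = 5"; cases "t = 6"; cases "t = 7") auto
    then show False using lin_indep2_imp_neq_sign_multiple[OF assms(9,10)] by blast
  qed
  moreover have "\<alpha> 7 \<in> {-1/2, 1/2}" "\<beta> 7 \<in> {-1/2, 1/2}" using \<alpha>(1) \<beta>(1) by (auto simp: half_vec_def)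
  ultimately have "\<beta> 7 = - \<epsilon> * \<alpha> 7" using assms(10) by auto
  have "2 * \<beta> t = (if t < 5 then \<epsilon> else - \<epsilon>) * (2 * \<alpha> t)" if "t < 8" for t
  proof -
    have "t < 5 \<or> t = 5 \<or> t = 6 \<or> t = 7" using that by linarith
    then show ?thesis using assms(11) \<alpha>567 \<beta>567 \<open>\<beta> 7 = - \<epsilon> * \<alpha> 7\<close> by auto
  qed
  then have "(\<Prod>t<8. 2 * \<beta> t) = (\<Prod>t<8. (if t < 5 then \<epsilon> else - \<epsilon>) * (2 * \<alpha> t))"
    by (intro prod.cong) auto
  also have "\<dots> = (\<Prod>t<8::nat. if t < 5 then \<epsilon> else - \<epsilon>) * (\<Prod>t<8. 2 * \<alpha> t)" by (rule prod.distrib)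
  also have "\<dots> = (\<Prod>t<8::nat. if t < 5 then \<epsilon> else - \<epsilon>)" using \<alpha>(2) by simp
  also have "\<dots> = - 1" using assms(10) unfolding prod_lessThan_8 by auto
  finally show False using \<beta>(2) by simp
qed

lemma E6_separating_root_half_half:
  assumes \<alpha>: "half_vec 8 \<alpha>" "(\<Prod>k<8. 2 * \<alpha> k) = 1" "\<alpha> 6 + \<alpha> 7 = 0" "\<alpha> 5 + \<alpha> 7 = 0"
    and \<beta>: "half_vec 8 \<beta>" "(\<Prod>k<8. 2 * \<beta> k) = 1" "\<beta> 6 + \<beta> 7 = 0" "\<beta> 5 + \<beta> 7 = 0"
    and "lin_indep2 \<alpha> \<beta>"
  shows "separating_root E6_roots \<alpha> \<beta>"
proof (cases "\<exists>k<5. \<exists>m<5. \<beta> k = \<alpha> k \<and> \<beta> m = - \<alpha> m")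
  case True
  then obtain k m where "k < 5" "m < 5" "\<beta> k = \<alpha> k" "\<beta> m = - \<alpha> m" by blast
  then show ?thesis
    using \<alpha>(1) by (intro separating_root_agree_disagree[OF pair_roots_in_E6]) (auto simp: half_vec_def)
next
  case False
  moreover have "(5::nat) \<le> 8" by simp
  ultimately obtain \<epsilon> where "\<epsilon> \<in> {-1, 1}" "\<And>t. t < 5 \<Longrightarrow> \<beta> t = \<epsilon> * \<alpha> t"
    using half_vec_same_or_opposite[OF \<alpha>(1) \<beta>(1)] by blast
  then show ?thesis using E6_half_roots_not_sign_multiple \<alpha> \<beta> assms(9) by blast
qed

lemma E6_separating_root:
  assumes "\<alpha> \<in> E6_roots" "\<beta> \<in> E6_roots" "lin_indep2 \<alpha> \<beta>"
  shows "separating_root E6_roots \<alpha> \<beta>"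
  using assms(1)
proof (cases rule: E6_roots_cases)
  case \<alpha>: (1 i j a b)
  show ?thesis
    using assms(2)
  proof (cases rule: E6_roots_cases)
    case \<beta>: (1 k l c d)
    have "i \<noteq> j" "i < 5" using \<alpha>(1,2) by simp_all
    then obtain \<gamma> where "\<gamma> \<in> E6_roots" "\<gamma> i = a / 2" "\<gamma> j = - b / 2"
      using E6_half_root_exists \<alpha>(2-4) by blast
    then show ?thesis
      unfolding \<alpha>(5) \<beta>(5) using \<alpha> \<beta> assms(3)
      by (intro separating_root_pairs[OF pair_roots_in_E6, where \<gamma> = \<gamma>])
        (auto simp: E6_roots_iff E8_root_norm)
  next
    case \<beta>: 2
    show ?thesis
      by (rule separating_root_half_right[OF pair_roots_in_E6, of "[i, j]"])
        (use \<alpha> \<beta> in \<open>auto simp: half_vec_def\<close>)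
  qed
next
  case \<alpha>: 2
  show ?thesis
    using assms(2)
  proof (cases rule: E6_roots_cases)
    case \<beta>: (1 k l c d)
    show ?thesis
      by (rule separating_root_half_left[OF pair_roots_in_E6, of "[k, l]" k])
        (use \<alpha> \<beta> in \<open>auto simp: half_vec_def\<close>)
  next
    case \<beta>: 2
    show ?thesis using E6_separating_root_half_half \<alpha> \<beta> assms(3) by blast
  qed
qed

section \<open>F4\<close>

lemma F4_roots_cases:
  assumes "v \<in> F4_roots"
  obtains i a where "i < 4" "a \<in> {-1, 1}" "v = signed_unit i a"
  | i j a b where "i < j" "j < 4" "a \<in> {-1, 1}" "b \<in> {-1, 1}" "v = signed_pair i j a b"
  | "half_vec 4 v"
proof -
  consider (unit) "\<exists>i a. i < 4 \<and> a \<in> {-1, 1} \<and> v = signed_unit i a"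
    | (pair) "\<exists>i j a b. i < j \<and> j < 4 \<and> a \<in> {-1, 1} \<and> b \<in> {-1, 1} \<and> v = signed_pair i j a b"
    | (half) "\<forall>k<4. v k \<in> {1/2, -1/2}" "\<forall>k\<ge>4. v k = 0"
    using assms unfolding F4_roots_def signed_pair_def signed_unit_def by blast
  then show ?thesis
  proof cases
    case half
    then have "half_vec 4 v" unfolding half_vec_def by auto
    then show ?thesis using that(3) by blast
  qed (use that(1,2) in blast)+
qed

lemma pair_roots_in_F4: "pair_roots_in F4_roots 4"
  unfolding pair_roots_in_def
proof (intro allI impI)
  fix i j :: nat and a b :: real
  assume "i \<noteq> j" "i < 4" "j < 4" "a \<in> {-1, 1}" "b \<in> {-1, 1}"
  then have "\<exists>i' j' a' b'. i' < j' \<and> j' < 4 \<and> a' \<in> {-1, 1} \<and> b' \<in> {-1, 1} \<and>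
      signed_pair i j a b = signed_pair i' j' a' b'"
    by (metis linorder_neqE_nat signed_pair_swap)
  then show "signed_pair i j a b \<in> F4_roots" unfolding F4_roots_def signed_pair_def by blast
qed

lemma ip_signed_pair_self:
  "i \<noteq> j \<Longrightarrow> i < 8 \<Longrightarrow> j < 8 \<Longrightarrow> a \<in> {-1, 1} \<Longrightarrow> b \<in> {-1, 1} \<Longrightarrow>
    ip (signed_pair i j a b) (signed_pair i j a b) = 2"
  by (auto simp: ip_signed_pair_left)

lemma F4_separating_root_pair_pair:
  assumes "i < j" "j < 4" "a \<in> {-1, 1}" "b \<in> {-1, 1}" "k < l" "l < 4" "c \<in> {-1, 1}" "d \<in> {-1, 1}"
    and "lin_indep2 (signed_pair i j a b) (signed_pair k l c d)"
  shows "separating_root F4_roots (signed_pair i j a b) (signed_pair k l c d)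
    \<or> ip (signed_pair i j a b) (signed_pair k l c d) = 0"
proof -
  consider "k \<notin> {i, j}" "l \<in> {i, j}" | "k \<in> {i, j}" "l \<notin> {i, j}"
    | "{k, l} = {i, j}" | "k \<notin> {i, j}" "l \<notin> {i, j}"
    using assms(1,5) by auto
  then show ?thesis
  proof cases
    case 1
    have "separating_root F4_roots (signed_pair i j a b) (signed_pair k l c d)"
      by (rule separating_root_fresh_coordinate[OF pair_roots_in_F4, of "[i, j, k]" k]) (use 1 assms in auto)
    then show ?thesis ..
  next
    case 2
    have "separating_root F4_roots (signed_pair i j a b) (signed_pair k l c d)"
      by (rule separating_root_fresh_coordinate[OF pair_roots_in_F4, of "[i, j, l]" l]) (use 2 assms in auto)
    then show ?thesis ..
  next
    case 3
    then have "k = i" "l = j" using assms(1,5) by (auto simp: doubleton_eq_iff)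
    then have "(c = a \<and> d = - b) \<or> (c = - a \<and> d = b)"
      using signed_pair_same_support assms by auto
    then show ?thesis using assms \<open>k = i\<close> \<open>l = j\<close> by (auto simp: ip_signed_pair_left)
  next
    case 4
    then show ?thesis using assms by (auto simp: ip_signed_pair_left)
  qed
qed

lemma F4_separating_root_of_unit:
  assumes \<alpha>: "i < 4" "a \<in> {-1, 1}" and "\<beta> \<in> F4_roots"
    and "lin_indep2 (signed_unit i a) \<beta>"
  shows "separating_root F4_roots (signed_unit i a) \<beta>"
  using assms(3)
proof (cases rule: F4_roots_cases)
  case \<beta>: (1 k c)
  have "k \<noteq> i"
  proof
    assume "k = i"
    then have "\<beta> = signed_unit i a \<or> signed_unit i a = (\<lambda>t. - \<beta> t)" using \<alpha> \<beta> by auto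
    then show False using lin_indep2_imp_neq[OF assms(4)] by blast
  qed
  then show ?thesis
    by (intro separating_root_fresh_coordinate[OF pair_roots_in_F4, of "[i, k]" k]) (use \<alpha> \<beta> in auto)
next
  case \<beta>: (2 k l c d)
  show ?thesis
  proof (cases "k = i")
    case True
    then show ?thesis
      by (intro separating_root_fresh_coordinate[OF pair_roots_in_F4, of "[i, l]" l]) (use \<alpha> \<beta> in auto)
  next
    case False
    then show ?thesis
      by (intro separating_root_fresh_coordinate[OF pair_roots_in_F4, of "[i, k, l]" k]) (use \<alpha> \<beta> in auto)
  qed
next
  case \<beta>: 3
  show ?thesis
    by (rule separating_root_half_right[OF pair_roots_in_F4, of "[i]"])
      (use \<alpha> \<beta> in \<open>auto simp: half_vec_def\<close>)
qed

lemma F4_separating_root_of_pair: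
  assumes \<alpha>: "i < j" "j < 4" "a \<in> {-1, 1}" "b \<in> {-1, 1}" and "\<beta> \<in> F4_roots"
    and "lin_indep2 (signed_pair i j a b) \<beta>"
  shows "separating_root F4_roots (signed_pair i j a b) \<beta>
    \<or> (ip (signed_pair i j a b) \<beta> = 0 \<and> ip \<beta> \<beta> = 2)"
  using assms(5)
proof (cases rule: F4_roots_cases)
  case \<beta>: (1 k c)
  consider "k \<notin> {i, j}" | "k = i" | "k = j" by blast
  then have "separating_root F4_roots (signed_pair i j a b) \<beta>"
  proof cases
    case 1
    then show ?thesis
      by (intro separating_root_fresh_coordinate[OF pair_roots_in_F4, of "[i, j, k]" k]) (use \<alpha> \<beta> in auto)
  next
    case 2
    then show ?thesis
      by (intro separating_root_long_pair[OF pair_roots_in_F4, of i j]) (use \<alpha> \<beta> in auto)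
  next
    case 3
    then show ?thesis
      by (intro separating_root_long_pair[OF pair_roots_in_F4, of j i]) (use \<alpha> \<beta> in auto)
  qed
  then show ?thesis ..
next
  case \<beta>: (2 k l c d)
  then show ?thesis
    using F4_separating_root_pair_pair[of i j a b k l c d] \<alpha> assms(6) by (auto simp: ip_signed_pair_self)
next
  case \<beta>: 3
  have "separating_root F4_roots (signed_pair i j a b) \<beta>"
    by (rule separating_root_half_right[OF pair_roots_in_F4, of "[i, j]"])
      (use \<alpha> \<beta> in \<open>auto simp: half_vec_def\<close>)
  then show ?thesis ..
qed

lemma F4_separating_root_of_half:
  assumes \<alpha>: "half_vec 4 \<alpha>" and "\<beta> \<in> F4_roots" "lin_indep2 \<alpha> \<beta>"
  shows "separating_root F4_roots \<alpha> \<beta>"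
  using assms(2)
proof (cases rule: F4_roots_cases)
  case \<beta>: (1 k c)
  show ?thesis
    by (rule separating_root_half_left[OF pair_roots_in_F4, of "[k]" k])
      (use \<alpha> \<beta> in \<open>auto simp: half_vec_def\<close>)
next
  case \<beta>: (2 k l c d)
  show ?thesis
    by (rule separating_root_half_left[OF pair_roots_in_F4, of "[k, l]" k])
      (use \<alpha> \<beta> in \<open>auto simp: half_vec_def\<close>)
next
  case \<beta>: 3
  obtain k m where "k < 4" "m < 4" "\<beta> k = \<alpha> k" "\<beta> m = - \<alpha> m"
    using half_vec_agree_disagree[OF \<alpha> \<beta> assms(3)] .
  then show ?thesis
    using \<alpha> by (intro separating_root_agree_disagree[OF pair_roots_in_F4]) (auto simp: half_vec_def)
qed

lemma F4_separating_root:
  assumes "\<alpha> \<in> F4_roots" "\<beta> \<in> F4_roots" "lin_indep2 \<alpha> \<beta>"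
  shows "separating_root F4_roots \<alpha> \<beta> \<or> (ip \<alpha> \<beta> = 0 \<and> ip \<alpha> \<alpha> = 2 \<and> ip \<beta> \<beta> = 2)"
  using assms(1)
proof (cases rule: F4_roots_cases)
  case (1 i a)
  then show ?thesis using F4_separating_root_of_unit assms(2,3) by blast
next
  case (2 i j a b)
  then show ?thesis using F4_separating_root_of_pair assms(2,3) ip_signed_pair_self by simp
next
  case 3
  then show ?thesis using F4_separating_root_of_half assms(2,3) by blast
qed

theorem proposition6p4:
  fixes \<Phi> \<Lambda> :: "vec set" and \<alpha> \<beta> :: vec
  assumes "\<Phi> \<in> {E6_roots, E7_roots, E8_roots, F4_roots}"
    and "is_group_lattice \<Phi> \<Lambda>"
    and "\<exists>u::'r::idom. u dvd 1 \<and> u \<noteq> 1"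
    and "\<alpha> \<in> \<Phi>" and "\<beta> \<in> \<Phi>" and "lin_indep2 \<alpha> \<beta>"
    and "\<not> ({u::'r. u dvd 1} = {1, -1} \<and> \<Phi> = F4_roots \<and>
            ip \<alpha> \<beta> = 0 \<and> ip \<alpha> \<alpha> = 2 \<and> ip \<beta> \<beta> = 2)"
  shows "\<exists>s :: vec \<Rightarrow> 'r. torus_witness \<Lambda> s \<alpha> \<beta>"
proof -
  have "separating_root \<Phi> \<alpha> \<beta> \<or> (\<Phi> = F4_roots \<and> ip \<alpha> \<beta> = 0 \<and> ip \<alpha> \<alpha> = 2 \<and> ip \<beta> \<beta> = 2)"
    using assms(1,4-6) E6_separating_root E7_separating_root E8_separating_root F4_separating_root
    by blast
  then show ?thesis
  proof
    assume "separating_root \<Phi> \<alpha> \<beta>"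
    then show ?thesis using torus_witness_of_separating_root assms(2,3) by blast
  next
    assume "\<Phi> = F4_roots \<and> ip \<alpha> \<beta> = 0 \<and> ip \<alpha> \<alpha> = 2 \<and> ip \<beta> \<beta> = 2"
    then show ?thesis using torus_witness_of_orthogonal_root[OF assms(2,5)] assms(7) by blast
  qed
qed

end
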